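(* Let $1<q<2$ and let $(\mathbf{y}_{(p)})_{p\ge0}$ be generated by the $q$PWAWS iteration (see context) from an arbitrary starting point $\mathbf{y}_{(0)}\in\mathbb{R}^d$. If $\mathbf{y}_{(p)}\ne\mathbf{M}$ for all $p$, then $\mathbf{y}_{(p)}\to\mathbf{M}$ as $p\to\infty$. If some $\mathbf{y}_{(p)}=\mathbf{M}$, this is detected: either $\mathbf{y}_{(p)}\notin\{\mathbf{x}_i\}$ and $\mathbf{T}_1(\mathbf{y}_{(p)})=\mathbf{y}_{(p)}$, or $\mathbf{y}_{(p)}=\mathbf{x}_k$ and $\nabla D_q(\mathbf{x}_k)=\mathbf{0}$.
   Context: Let $\mathbf{x}_1,\dots,\mathbf{x}_m\in\mathbb{R}^d$ be distinct data points, not all lying on a common affine line, and $\eta_1,\dots,\eta_m>0$ weights. Let $1<q<2$, $C_q(\mathbf{y})=\sum_{i=1}^m \eta_i^q\|\mathbf{y}-\mathbf{x}_i\|^q$ (Euclidean norm), strictly convex with unique minimizer $\mathbf{M}$. For $\mathbf{y}\notin\{\mathbf{x}_i\}$, $\mathbf{T}_1(\mathbf{y})=\frac{\sum_{i} \eta_i^q\|\mathbf{y}-\mathbf{x}_i\|^{q-2}\mathbf{x}_i}{\sum_{i} \eta_i^q\|\mathbf{y}-\mathbf{x}_i\|^{q-2}}$. For each $k$, $\nabla D_q(\mathbf{x}_k)=\sum_{i\ne k} q\eta_i^q\|\mathbf{x}_k-\mathbf{x}_i\|^{q-2}(\mathbf{x}_k-\mathbf{x}_i)$; $\mathbf{x}_k=\mathbf{M}$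 iff $\nabla D_q(\mathbf{x}_k)=\mathbf{0}$, and if $\nabla D_q(\mathbf{x}_k)\neq\mathbf{0}$ there exist $\lambda>0$ with $C_q(\mathbf{x}_k-\lambda\nabla D_q(\mathbf{x}_k))<C_q(\mathbf{x}_k)$. The $q$PWAWS iteration: if $\mathbf{y}_{(p)}=\mathbf{M}$ the algorithm stops; otherwise, if $\mathbf{y}_{(p)}\notin\{\mathbf{x}_i\}$ set $\mathbf{y}_{(p+1)}=\mathbf{T}_1(\mathbf{y}_{(p)})$, and if $\mathbf{y}_{(p)}=\mathbf{x}_k\neq\mathbf{M}$ set $\mathbf{y}_{(p+1)}=\mathbf{x}_k-\lambda_p\nabla D_q(\mathbf{x}_k)$, where $\lambda_p>0$ is any number with $C_q(\mathbf{x}_k-\lambda_p\nabla D_q(\mathbf{x}_k))<C_q(\mathbf{x}_k)$. *)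

theory Defs
  imports "HOL-Analysis.Analysis"
begin

definition Cq :: "nat \<Rightarrow> real \<Rightarrow> (nat \<Rightarrow> 'a::euclidean_space) \<Rightarrow> (nat \<Rightarrow> real) \<Rightarrow> 'a \<Rightarrow> real" where
  "Cq m q x eta y = (\<Sum>i<m. eta i powr q * norm (y - x i) powr q)"

definition T1 :: "nat \<Rightarrow> real \<Rightarrow> (nat \<Rightarrow> 'a::euclidean_space) \<Rightarrow> (nat \<Rightarrow> real) \<Rightarrow> 'a \<Rightarrow> 'a" where
  "T1 m q x eta y =
     (1 / (\<Sum>i<m. eta i powr q * norm (y - x i) powr (q - 2))) *\<^sub>R
     (\<Sum>i<m. (eta i powr q * norm (y - x i) powr (q - 2)) *\<^sub>R x i)"

definition gradDq :: "nat \<Rightarrow> real \<Rightarrow> (nat \<Rightarrow> 'a::euclidean_space) \<Rightarrow> (nat \<Rightarrow> real) \<Rightarrow> nat \<Rightarrow> 'a" where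
  "gradDq m q x eta k =
     (\<Sum>i\<in>{..<m} - {k}. (q * eta i powr q * norm (x k - x i) powr (q - 2)) *\<^sub>R (x k - x i))"

definition qpwaws_step :: "nat \<Rightarrow> real \<Rightarrow> (nat \<Rightarrow> 'a::euclidean_space) \<Rightarrow> (nat \<Rightarrow> real) \<Rightarrow> 'a \<Rightarrow> 'a \<Rightarrow> bool" where
  "qpwaws_step m q x eta y y' \<longleftrightarrow>
     (y \<notin> x ` {..<m} \<longrightarrow> y' = T1 m q x eta y) \<and>
     (\<forall>k<m. y = x k \<longrightarrow>
        (\<exists>lam>0. y' = x k - lam *\<^sub>R gradDq m q x eta k \<and> Cq m q x eta y' < Cq m q x eta (x k)))"

end

theory Submission
  imports Defs
begin

text \<open>The proof is a majorization argument. Off the data points each term \<open>norm (y - x i) powr q\<close>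
  lies below its quadratic majorant at the current iterate (concavity of \<open>t powr (q/2)\<close>), and
  \<open>T1\<close> minimizes the weighted sum of these majorants, so \<open>T1\<close> lowers \<open>Cq\<close> by at least
  \<open>q/2\<close> times the total weight times \<open>norm (y - T1 y)\<^sup>2\<close>. A fixed point of \<open>T1\<close> has zero gradient and is the minimizer,
  because \<open>Cq\<close> lies strictly above its tangent planes. Hence the costs decrease strictly, the
  iterates eventually avoid the finite data set, and on a compact band of cost levels away from
  the data the decrease is bounded below. So the costs could only stall above the minimum if the
  iterates lingered near some data point \<open>x k \<noteq> M\<close>; but there the gradient does not vanish,
  the weight of \<open>x k\<close> grows like \<open>dist powr (q - 2)\<close>, and \<open>T1\<close> pushes points away to distance
  of order \<open>dist powr (2 - q)\<close>, much larger than \<open>dist\<close>. Compactness of sublevel sets then turns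
  convergence of the costs into convergence of the iterates. Detection of \<open>M\<close> is the first-order
  condition at the minimizer.\<close>

lemma powr_gt_tangent:
  fixes c s q :: real
  assumes q: "1 < q" and c: "0 < c" and s: "0 \<le> s" "s \<noteq> c"
  shows "c powr q + q * c powr (q - 1) * (s - c) < s powr q"
proof -
  define f where "f t = t powr q - q * c powr (q - 1) * t" for t
  have cc: "q * c powr (q - 1) * c = q * c powr q"
    using c by (simp add: powr_diff)
  have deriv: "(f has_real_derivative q * (t powr (q - 1) - c powr (q - 1))) (at t)" if "0 < t" for t
    unfolding f_def using that by (auto intro!: derivative_eq_intros simp: algebra_simps)
  have cont: "continuous_on {a..b} f" if "0 \<le> a" for a b
    unfolding f_def using q that by (intro continuous_intros continuous_on_powr') auto
  have "f c < f s"
  proof (cases "s < c")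
    case True
    show ?thesis
    proof (rule DERIV_neg_imp_decreasing_open[OF True _ cont[OF s(1)]])
      fix t assume t: "s < t" "t < c"
      then have "t powr (q - 1) < c powr (q - 1)" using s q by (intro powr_less_mono2) auto
      then show "\<exists>y. (f has_real_derivative y) (at t) \<and> y < 0"
        using deriv[of t] t s q
        by (intro exI[of _ "q * (t powr (q - 1) - c powr (q - 1))"] conjI) (auto simp: mult_less_0_iff)
    qed
  next
    case False
    then have "c < s" using s by simp
    show ?thesis
    proof (rule DERIV_pos_imp_increasing_open[OF \<open>c < s\<close> _ cont[OF less_imp_le[OF c]]])
      fix t assume t: "c < t" "t < s"
      then have "c powr (q - 1) < t powr (q - 1)" using c q by (intro powr_less_mono2) auto
      then show "\<exists>y. (f has_real_derivative y) (at t) \<and> 0 < y"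
        using deriv[of t] t c q by (intro exI[of _ "q * (t powr (q - 1) - c powr (q - 1))"] conjI) auto
    qed
  qed
  then show ?thesis unfolding f_def right_diff_distrib cc by linarith
qed

lemma powr_le_tangent:
  fixes p s t :: real
  assumes p: "0 < p" "p \<le> 1" and s: "0 \<le> s" and t: "0 < t"
  shows "s powr p \<le> t powr p + p * t powr (p - 1) * (s - t)"
proof (cases "s = 0")
  case True
  have "t powr p = t * t powr (p - 1)" using t by (simp add: powr_diff)
  then show ?thesis using True p t by (simp add: algebra_simps)
next
  case False
  then have "0 < s" using s by simp
  then have "s powr p * t powr (1 - p) \<le> p * s + (1 - p) * t"
    using Youngs_inequality_0[of p "1 - p" s t] p t by simp
  then have "s powr p * t powr (1 - p) * t powr (p - 1) \<le> (p * s + (1 - p) * t) * t powr (p - 1)"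
    using t by (intro mult_right_mono) auto
  moreover have "t powr (1 - p) * t powr (p - 1) = 1" using t by (simp flip: powr_add)
  moreover have "t powr p = t * t powr (p - 1)" using t by (simp add: powr_diff)
  ultimately show ?thesis by (simp add: algebra_simps)
qed

lemma powr_le_quadratic_majorant:
  fixes a b q :: real
  assumes q: "0 < q" "q \<le> 2" and a: "0 \<le> a" and b: "0 < b"
  shows "a powr q \<le> b powr q + q / 2 * b powr (q - 2) * (a\<^sup>2 - b\<^sup>2)"
proof -
  have sq: "(u\<^sup>2) powr (r / 2) = u powr r" if "0 \<le> u" for u r :: real
  proof (cases "u = 0")
    case False
    then have "u\<^sup>2 = u powr 2" using that by (simp add: powr_realpow)
    then show ?thesis by (simp add: powr_powr)
  qed simp
  have "(a\<^sup>2) powr (q / 2) \<le> (b\<^sup>2) powr (q / 2) + q / 2 * (b\<^sup>2) powr ((q - 2) / 2) * (a\<^sup>2 - b\<^sup>2)"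
    using powr_le_tangent[of "q / 2" "a\<^sup>2" "b\<^sup>2"] q b by (simp add: diff_divide_distrib)
  then show ?thesis using a b by (simp only: sq less_imp_le)
qed

text \<open>At \<open>v = 0\<close> the linear terms below vanish because \<open>0 powr (q - 2) = 0\<close>; this is the correct
  tangent and derivative there since \<open>q > 1\<close>.\<close>
lemma norm_powr_gt_tangent:
  fixes u v :: "'a::real_inner" and q :: real
  assumes q: "1 < q" and uv: "u \<noteq> v"
  shows "norm v powr q + q * norm v powr (q - 2) * (v \<bullet> (u - v)) < norm u powr q"
proof (cases "v = 0")
  case True
  then show ?thesis using q uv by simp
next
  case False
  define a b where "a = norm u" and "b = norm v"
  have b: "0 < b" using False by (simp add: b_def)
  have "b powr (q - 2) * b = b powr (q - 1)" "b powr (q - 1) * b = b powr q"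
    "b powr (q - 2) * b\<^sup>2 = b powr q"
    using b by (simp_all add: power2_eq_square powr_diff)
  then have split: "q * b powr (q - 2) * (v \<bullet> (u - v))
      = q * b powr (q - 2) * (v \<bullet> u - b * a) + q * b powr (q - 1) * (a - b)"
    by (simp add: inner_diff_right b_def power2_norm_eq_inner algebra_simps)
  have cs: "v \<bullet> u \<le> b * a" unfolding a_def b_def by (rule norm_cauchy_schwarz)
  have cs_term: "q * b powr (q - 2) * (v \<bullet> u - b * a) \<le> 0"
    using cs q b by (simp add: mult_nonneg_nonpos)
  show ?thesis
  proof (cases "a = b")
    case True
    have "v \<bullet> u \<noteq> b * a"
    proof
      assume "v \<bullet> u = b * a"
      then have "b *\<^sub>R u = b *\<^sub>R v" using True norm_cauchy_schwarz_eq[of v u] by (simp add: a_def b_def)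
      then show False using b uv by simp
    qed
    then have "q * b powr (q - 2) * (v \<bullet> u - b * a) < 0"
      using cs q b by (simp add: mult_pos_neg)
    moreover have "q * b powr (q - 1) * (a - b) = 0" "a powr q = b powr q" using True by simp_all
    ultimately show ?thesis using split unfolding a_def b_def by linarith
  next
    case False
    then have "b powr q + q * b powr (q - 1) * (a - b) < a powr q"
      using q b by (intro powr_gt_tangent) (auto simp: a_def)
    then show ?thesis using split cs_term by (simp add: a_def b_def)
  qed
qed

lemma has_derivative_norm_powr:
  fixes v :: "'a::real_inner" and q :: real
  assumes q: "1 < q"
  shows "((\<lambda>u. norm u powr q) has_derivative (\<lambda>h. q * norm v powr (q - 2) * (v \<bullet> h))) (at v)"
proof (cases "v = 0")
  case True
  have "((\<lambda>u. norm u powr (q - 1)) \<longlongrightarrow> 0) (at 0)"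
    using q by (intro tendsto_zero_powrI tendsto_norm_zero tendsto_ident_at) auto
  moreover have "\<forall>\<^sub>F u in at 0. norm u powr (q - 1) = norm (norm u powr q - norm (0::'a) powr q - 0) / norm (u - 0)"
    by (auto simp: eventually_at_filter powr_diff)
  ultimately have "((\<lambda>u. norm (norm u powr q - norm (0::'a) powr q - 0) / norm (u - 0)) \<longlongrightarrow> 0) (at 0)"
    by (rule Lim_transform_eventually)
  then show ?thesis using True by (simp add: has_derivative_iff_norm)
next
  case False
  show ?thesis
  proof (rule has_derivative_eq_rhs)
    show "((\<lambda>u. norm u powr q) has_derivative
        (\<lambda>h. norm v powr q * (0 * ln (norm v) + h \<bullet> sgn v * q / norm v))) (at v)"
      using False by (intro has_derivative_powr has_derivative_norm has_derivative_const) auto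
    have "norm v powr q = norm v powr (q - 2) * norm v * norm v"
      using False by (simp add: powr_diff power2_eq_square)
    then show "(\<lambda>h. norm v powr q * (0 * ln (norm v) + h \<bullet> sgn v * q / norm v))
        = (\<lambda>h. q * norm v powr (q - 2) * (v \<bullet> h))"
      using False by (auto simp: sgn_div_norm inner_commute fun_eq_iff)
  qed
qed

lemma tendsto_dist_at: "((\<lambda>y. dist y a) \<longlongrightarrow> 0) (at a)"
  using tendsto_dist[OF tendsto_ident_at tendsto_const, of a a] by simp

lemma strict_decreasing_eventually_notin_finite:
  fixes f :: "'a \<Rightarrow> real" and y :: "nat \<Rightarrow> 'a"
  assumes dec: "\<And>p. f (y (Suc p)) < f (y p)" and A: "finite A"
  shows "\<forall>\<^sub>F p in sequentially. y p \<notin> A"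
proof -
  have "strict_mono (\<lambda>p. - f (y p))" using dec by (simp add: strict_mono_Suc_iff)
  then have "inj ((\<lambda>v. - f v) \<circ> y)" by (simp add: o_def strict_mono_on_imp_inj_on)
  then have "finite (y -` A)" using A by (intro finite_vimageI) (auto dest: inj_on_imageI2)
  then show ?thesis by (simp flip: cofinite_eq_sequentially add: eventually_cofinite vimage_def)
qed

lemma tendsto_strict_minimizer:
  fixes f :: "'a::metric_space \<Rightarrow> real" and y :: "nat \<Rightarrow> 'a"
  assumes cont: "continuous_on UNIV f" and sublevel: "compact {z. f z \<le> B}"
    and strict_min: "\<And>z. z \<noteq> M \<Longrightarrow> f M < f z"
    and bounded: "\<And>p. f (y p) \<le> B" and lim: "(\<lambda>p. f (y p)) \<longlonglongrightarrow> f M"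
  shows "y \<longlonglongrightarrow> M"
  unfolding tendsto_iff
proof (intro allI impI)
  fix \<epsilon> :: real assume "0 < \<epsilon>"
  define A where "A = {z. f z \<le> B} \<inter> {z. \<epsilon> \<le> dist z M}"
  have "compact A"
    unfolding A_def by (intro compact_Int_closed sublevel closed_Collect_le continuous_intros)
  obtain \<alpha> where \<alpha>: "f M < \<alpha>" "\<And>z. z \<in> A \<Longrightarrow> \<alpha> \<le> f z"
  proof (cases "A = {}")
    case True
    then show thesis using that[of "f M + 1"] by simp
  next
    case False
    then obtain z0 where "z0 \<in> A" "\<And>z. z \<in> A \<Longrightarrow> f z0 \<le> f z"
      using continuous_attains_inf[OF \<open>compact A\<close> _ continuous_on_subset[OF cont]] by blast
    moreover have "z0 \<noteq> M" using \<open>z0 \<in> A\<close> \<open>0 < \<epsilon>\<close> by (auto simp: A_def)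
    ultimately show thesis using that[of "f z0"] strict_min by blast
  qed
  show "\<forall>\<^sub>F p in sequentially. dist (y p) M < \<epsilon>"
    using order_tendstoD(2)[OF lim \<alpha>(1)]
  proof eventually_elim
    case (elim p)
    then have "y p \<notin> A" using \<alpha>(2) by force
    then show "dist (y p) M < \<epsilon>" using bounded[of p] by (auto simp: A_def)
  qed
qed

lemma finite_imp_uniform_discrete: "finite A \<Longrightarrow> uniform_discrete A"
  by (induction rule: finite_induct) (simp_all add: uniform_discrete_insert)

lemma eventually_at_right_zero_ex:
  "\<forall>\<^sub>F \<delta> in at_right (0::real). P \<delta> \<Longrightarrow> \<exists>\<delta>>0. P \<delta>"
  unfolding eventually_at_right_field by (metis dense)

lemma repelling_points_uniform_radius:
  fixes T :: "'a::metric_space \<Rightarrow> 'a" and A :: "'a set"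
  assumes A: "finite A" and s: "0 < s"
    and tendsto: "\<And>a. a \<in> A \<Longrightarrow> (T \<longlongrightarrow> a) (at a)"
    and repel: "\<And>a. a \<in> A \<Longrightarrow> filterlim (\<lambda>y. dist (T y) a / dist y a) at_top (at a)"
  shows "\<exists>\<delta>>0. \<delta> \<le> s \<and> (\<forall>a\<in>A. \<forall>y. y \<noteq> a \<and> dist y a < \<delta> \<longrightarrow>
    dist (T y) a < s \<and> 2 * dist y a < dist (T y) a)"
proof -
  have "\<forall>\<^sub>F \<delta> in at_right 0. \<forall>a\<in>A. \<forall>y. y \<noteq> a \<and> dist y a < \<delta> \<longrightarrow>
      dist (T y) a < s \<and> 2 * dist y a < dist (T y) a"
  proof (rule eventually_ball_finite[OF A], rule ballI)
    fix a assume a: "a \<in> A"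
    have "\<forall>\<^sub>F y in at a. dist (T y) a < s \<and> 2 < dist (T y) a / dist y a"
      using tendsto[OF a, unfolded tendsto_iff] s repel[OF a, unfolded filterlim_at_top_dense]
      by (intro eventually_conj) auto
    then obtain d where d: "0 < d"
      "\<And>y. y \<noteq> a \<Longrightarrow> dist y a < d \<Longrightarrow> dist (T y) a < s \<and> 2 < dist (T y) a / dist y a"
      unfolding eventually_at by blast
    show "\<forall>\<^sub>F \<delta> in at_right 0. \<forall>y. y \<noteq> a \<and> dist y a < \<delta> \<longrightarrow>
        dist (T y) a < s \<and> 2 * dist y a < dist (T y) a"
      unfolding eventually_at_right_field
    proof (intro exI[of _ d] conjI allI impI)
      fix \<delta> y assume y: "\<delta> < d" "y \<noteq> a \<and> dist y a < \<delta>"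
      then have "dist (T y) a < s" "2 < dist (T y) a / dist y a" using d(2)[of y] by auto
      then show "dist (T y) a < s" "2 * dist y a < dist (T y) a"
        using y by (auto simp: less_divide_eq)
    qed (use d in simp)
  qed
  moreover have "\<forall>\<^sub>F \<delta> in at_right 0. \<delta> \<le> s"
    using eventually_at_right_real[OF s] by eventually_elim simp
  ultimately show ?thesis
    using eventually_at_right_zero_ex[OF eventually_conj] by blast
qed

lemma orbit_leaves_repelling_neighbourhood:
  fixes T :: "'a::metric_space \<Rightarrow> 'a" and z :: "nat \<Rightarrow> 'a"
  assumes sep: "\<And>a b. a \<in> A \<Longrightarrow> b \<in> A \<Longrightarrow> a \<noteq> b \<Longrightarrow> 2 * s \<le> dist a b" and "\<delta> \<le> s"
    and step: "\<And>a y. a \<in> A \<Longrightarrow> y \<noteq> a \<Longrightarrow> dist y a < \<delta> \<Longrightarrow>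
      dist (T y) a < s \<and> 2 * dist y a < dist (T y) a"
    and orbit: "\<And>p. z (Suc p) = T (z p)" and off: "\<And>p. z p \<notin> A"
  shows "\<exists>p. \<forall>a\<in>A. \<delta> \<le> dist (z p) a"
proof (rule ccontr)
  assume "\<not> ?thesis"
  then have near: "\<And>p. \<exists>a\<in>A. dist (z p) a < \<delta>" by (auto simp: not_le)
  obtain a where a: "a \<in> A" "dist (z 0) a < \<delta>" using near by blast
  define r where "r = dist (z 0) a"
  have "0 < r" using off[of 0] a(1) by (auto simp: r_def)
  have trapped: "dist (z n) a < \<delta> \<and> 2 ^ n * r \<le> dist (z n) a" for n
  proof (induction n)
    case 0
    then show ?case using a by (simp add: r_def)
  next
    case (Suc n)
    have "z n \<noteq> a" using off[of n] a(1) by auto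
    then have far: "dist (z (Suc n)) a < s" "2 * dist (z n) a < dist (z (Suc n)) a"
      using step[OF a(1)] Suc.IH orbit by auto
    obtain b where b: "b \<in> A" "dist (z (Suc n)) b < \<delta>" using near by blast
    have "b = a"
    proof (rule ccontr)
      assume "b \<noteq> a"
      then have "2 * s \<le> dist a b" using sep a(1) b(1) by auto
      also have "\<dots> \<le> dist (z (Suc n)) a + dist (z (Suc n)) b" by (rule dist_triangle3)
      finally show False using far(1) b(2) \<open>\<delta> \<le> s\<close> by linarith
    qed
    then show ?case using b(2) far(2) Suc.IH by auto
  qed
  obtain n where "\<delta> / r < 2 ^ n" using real_arch_pow[of 2 "\<delta> / r"] by auto
  then show False using trapped[of n] \<open>0 < r\<close> by (simp add: divide_less_eq)
qed

lemma repelling_points_escape: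
  fixes T :: "'a::metric_space \<Rightarrow> 'a" and A :: "'a set"
  assumes A: "finite A"
    and tendsto: "\<And>a. a \<in> A \<Longrightarrow> (T \<longlongrightarrow> a) (at a)"
    and repel: "\<And>a. a \<in> A \<Longrightarrow> filterlim (\<lambda>y. dist (T y) a / dist y a) at_top (at a)"
  shows "\<exists>\<delta>>0. \<forall>z. (\<forall>p. z (Suc p) = T (z p)) \<longrightarrow> (\<forall>p. z p \<notin> A) \<longrightarrow>
    (\<exists>p. \<forall>a\<in>A. \<delta> \<le> dist (z p) a)"
proof -
  obtain e where e: "0 < e" "\<And>a b. a \<in> A \<Longrightarrow> b \<in> A \<Longrightarrow> dist a b < e \<Longrightarrow> a = b"
    using finite_imp_uniform_discrete[OF A] unfolding uniform_discrete_def by blast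
  then have sep: "2 * (e / 2) \<le> dist a b" if "a \<in> A" "b \<in> A" "a \<noteq> b" for a b
    using that by force
  obtain \<delta> where "0 < \<delta>" "\<delta> \<le> e / 2" and step: "\<forall>a\<in>A. \<forall>y. y \<noteq> a \<and> dist y a < \<delta> \<longrightarrow>
      dist (T y) a < e / 2 \<and> 2 * dist y a < dist (T y) a"
    using repelling_points_uniform_radius[OF A _ tendsto repel, of "e / 2"] e(1) by auto
  show ?thesis
  proof (intro exI[of _ \<delta>] conjI allI impI \<open>0 < \<delta>\<close>)
    fix z assume "\<forall>p. z (Suc p) = T (z p)" "\<forall>p. z p \<notin> A"
    then show "\<exists>p. \<forall>a\<in>A. \<delta> \<le> dist (z p) a"
      using step by (intro orbit_leaves_repelling_neighbourhood[OF sep \<open>\<delta> \<le> e / 2\<close>]) auto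
  qed
qed

locale qpwaws =
  fixes m :: nat and q :: real and x :: "nat \<Rightarrow> 'a::euclidean_space" and eta :: "nat \<Rightarrow> real"
  assumes q_gt_1: "1 < q" and q_lt_2: "q < 2" and inj_x: "inj_on x {..<m}"
    and eta_pos: "\<And>i. i < m \<Longrightarrow> 0 < eta i" and m_pos: "0 < m"
begin

abbreviation C where "C \<equiv> Cq m q x eta"
abbreviation T where "T \<equiv> T1 m q x eta"
abbreviation data where "data \<equiv> x ` {..<m}"

text \<open>Since \<open>0 powr r = 0\<close>, the weight \<open>w i\<close> vanishes at \<open>x i\<close>: the singular term simply drops
  out of \<open>W\<close> and \<open>G\<close> at a data point, and \<open>G\<close> is the gradient of \<open>C\<close> everywhere.\<close>
definition w :: "nat \<Rightarrow> 'a \<Rightarrow> real" where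
  "w i y = eta i powr q * norm (y - x i) powr (q - 2)"

definition W :: "'a \<Rightarrow> real" where
  "W y = (\<Sum>i<m. w i y)"

definition G :: "'a \<Rightarrow> 'a" where
  "G y = (\<Sum>i<m. (q * w i y) *\<^sub>R (y - x i))"

lemma w_pos: "i < m \<Longrightarrow> y \<noteq> x i \<Longrightarrow> 0 < w i y"
  unfolding w_def using eta_pos[of i] by simp

lemma W_pos: "k < m \<Longrightarrow> y \<noteq> x k \<Longrightarrow> 0 < W y"
  unfolding W_def using w_pos by (intro sum_pos2[of _ k]) (auto simp: w_def)

lemma W_pos_off_data: "y \<notin> data \<Longrightarrow> 0 < W y"
  by (metis W_pos imageI lessThan_iff m_pos)

lemma W_scaleR_T: "0 < W y \<Longrightarrow> W y *\<^sub>R T y = (\<Sum>i<m. w i y *\<^sub>R x i)"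
  unfolding T1_def W_def w_def by simp

lemma sum_w_scaleR_diff: "y \<notin> data \<Longrightarrow> (\<Sum>i<m. w i y *\<^sub>R (y - x i)) = W y *\<^sub>R (y - T y)"
  using W_scaleR_T[OF W_pos_off_data]
  by (simp add: W_def scaleR_diff_right sum_subtractf scaleR_sum_left)

lemma G_eq_T: "y \<notin> data \<Longrightarrow> G y = (q * W y) *\<^sub>R (y - T y)"
  using sum_w_scaleR_diff by (simp add: G_def flip: scaleR_scaleR scaleR_sum_right)

lemma gradDq_eq_G: "k < m \<Longrightarrow> gradDq m q x eta k = G (x k)"
proof -
  assume k: "k < m"
  have "x i \<noteq> x k" if "i \<in> {..<m} - {k}" for i
    using inj_x k that by (auto dest: inj_onD)
  then have "gradDq m q x eta k = (\<Sum>i\<in>{..<m} - {k}. (q * w i (x k)) *\<^sub>R (x k - x i))"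
    unfolding gradDq_def w_def by (intro sum.cong) auto
  also have "\<dots> = G (x k)"
    unfolding G_def using k by (simp add: sum.remove[of "{..<m}" k] w_def)
  finally show ?thesis .
qed

lemma C_gt_tangent:
  assumes "y \<noteq> z"
  shows "C z + G z \<bullet> (y - z) < C y"
proof -
  have "C z + G z \<bullet> (y - z) = (\<Sum>i<m. eta i powr q *
      (norm (z - x i) powr q + q * norm (z - x i) powr (q - 2) * ((z - x i) \<bullet> ((y - x i) - (z - x i)))))"
    by (simp add: Cq_def G_def w_def inner_sum_left sum.distrib[symmetric] algebra_simps)
  also have "\<dots> < C y"
    unfolding Cq_def
  proof (rule sum_strict_mono)
    fix i assume "i \<in> {..<m}"
    then show "eta i powr q * (norm (z - x i) powr q + q * norm (z - x i) powr (q - 2) *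
        ((z - x i) \<bullet> ((y - x i) - (z - x i)))) < eta i powr q * norm (y - x i) powr q"
      using eta_pos[of i] assms by (intro mult_strict_left_mono norm_powr_gt_tangent q_gt_1) auto
  qed (use m_pos in auto)
  finally show ?thesis .
qed

lemma C_has_derivative: "(C has_derivative (\<lambda>h. G z \<bullet> h)) (at z)"
proof -
  have "((\<lambda>y. norm (y - x i) powr q) has_derivative
      (\<lambda>h. q * norm (z - x i) powr (q - 2) * ((z - x i) \<bullet> h))) (at z)" for i
    using has_derivative_compose[OF has_derivative_diff[OF has_derivative_ident has_derivative_const]
        has_derivative_norm_powr[OF q_gt_1]] by simp
  then have "(C has_derivative (\<lambda>h. \<Sum>i<m. eta i powr q * (q * norm (z - x i) powr (q - 2) * ((z - x i) \<bullet> h)))) (at z)"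
    unfolding Cq_def by (intro has_derivative_sum has_derivative_mult_right)
  then show ?thesis
    by (simp add: G_def w_def inner_sum_left algebra_simps)
qed

lemma G_zero_if_minimizer:
  assumes "\<And>y. C z \<le> C y"
  shows "G z = 0"
proof -
  have "(\<lambda>h. G z \<bullet> h) = (\<lambda>h. 0)"
    using assms by (intro differential_zero_maxmin[OF UNIV_I open_UNIV C_has_derivative]) auto
  then show ?thesis by (metis inner_eq_zero_iff)
qed

lemma sum_w_norm_diff: "y \<notin> data \<Longrightarrow>
    (\<Sum>i<m. w i y * ((norm (T y - x i))\<^sup>2 - (norm (y - x i))\<^sup>2)) = - W y * (norm (y - T y))\<^sup>2"
proof -
  assume y: "y \<notin> data"
  have "(\<Sum>i<m. w i y * ((norm (T y - x i))\<^sup>2 - (norm (y - x i))\<^sup>2))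
      = (\<Sum>i<m. w i y * (norm (T y - y))\<^sup>2 + 2 * ((T y - y) \<bullet> (w i y *\<^sub>R (y - x i))))"
    by (intro sum.cong refl) (simp add: power2_norm_eq_inner algebra_simps inner_commute)
  also have "\<dots> = W y * (norm (T y - y))\<^sup>2 + 2 * ((T y - y) \<bullet> (\<Sum>i<m. w i y *\<^sub>R (y - x i)))"
    by (simp add: W_def sum.distrib sum_distrib_right inner_sum_right sum_distrib_left)
  also have "\<dots> = W y * (norm (T y - y))\<^sup>2 + 2 * ((T y - y) \<bullet> (W y *\<^sub>R (y - T y)))"
    using sum_w_scaleR_diff[OF y] by simp
  also have "\<dots> = - W y * (norm (y - T y))\<^sup>2"
    by (simp add: power2_norm_eq_inner algebra_simps inner_commute)
  finally show ?thesis .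
qed

lemma C_T_le:
  assumes "y \<notin> data"
  shows "C (T y) \<le> C y - q / 2 * W y * (norm (y - T y))\<^sup>2"
proof -
  have "C (T y) \<le> (\<Sum>i<m. eta i powr q * norm (y - x i) powr q
      + q / 2 * (w i y * ((norm (T y - x i))\<^sup>2 - (norm (y - x i))\<^sup>2)))"
    unfolding Cq_def
  proof (rule sum_mono)
    fix i assume "i \<in> {..<m}"
    then have "norm (T y - x i) powr q \<le> norm (y - x i) powr q
        + q / 2 * norm (y - x i) powr (q - 2) * ((norm (T y - x i))\<^sup>2 - (norm (y - x i))\<^sup>2)"
      using assms q_gt_1 q_lt_2 by (intro powr_le_quadratic_majorant) auto
    then have "eta i powr q * norm (T y - x i) powr q \<le> eta i powr q * (norm (y - x i) powr q
        + q / 2 * norm (y - x i) powr (q - 2) * ((norm (T y - x i))\<^sup>2 - (norm (y - x i))\<^sup>2))"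
      by (rule mult_left_mono) simp
    then show "eta i powr q * norm (T y - x i) powr q \<le> eta i powr q * norm (y - x i) powr q
        + q / 2 * (w i y * ((norm (T y - x i))\<^sup>2 - (norm (y - x i))\<^sup>2))"
      unfolding w_def by (simp add: algebra_simps)
  qed
  also have "\<dots> = C y + q / 2 * (\<Sum>i<m. w i y * ((norm (T y - x i))\<^sup>2 - (norm (y - x i))\<^sup>2))"
    by (simp add: sum.distrib Cq_def sum_distrib_left)
  finally show ?thesis
    using sum_w_norm_diff[OF assms] by simp
qed

lemma continuous_C: "continuous_on UNIV C"
  unfolding Cq_def using q_gt_1
  by (intro continuous_on_sum continuous_on_mult_left continuous_on_powr' continuous_intros) auto

lemma continuous_T: "continuous_on (- data) T"
proof -
  have w_cont: "continuous_on (- data) (w i)" if "i < m" for i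
    unfolding w_def using that
    by (intro continuous_on_mult_left continuous_on_powr' continuous_intros) auto
  have "(\<Sum>i<m. w i y) \<noteq> 0" if "y \<in> - data" for y
    using W_pos_off_data[of y] that unfolding W_def by simp
  then have "continuous_on (- data) (\<lambda>y. (1 / W y) *\<^sub>R (\<Sum>i<m. w i y *\<^sub>R x i))"
    unfolding W_def by (intro continuous_intros w_cont) auto
  moreover have "T y = (1 / W y) *\<^sub>R (\<Sum>i<m. w i y *\<^sub>R x i)" for y
    unfolding T1_def W_def w_def ..
  ultimately show ?thesis by simp
qed

lemma compact_sublevel_C: "compact {z. C z \<le> B}"
proof -
  define e where "e = eta 0 powr q"
  have "0 < e" using eta_pos[OF m_pos] by (simp add: e_def)
  have "norm (z - x 0) \<le> max 1 (B / e)" if "C z \<le> B" for z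
  proof (cases "norm (z - x 0) \<le> 1")
    case False
    have "e * norm (z - x 0) powr q \<le> C z"
      unfolding Cq_def e_def using m_pos eta_pos
      by (intro member_le_sum[of 0 "{..<m}" "\<lambda>i. eta i powr q * norm (z - x i) powr q"]) auto
    moreover have "norm (z - x 0) \<le> norm (z - x 0) powr q"
      using False q_gt_1 powr_mono[of 1 q "norm (z - x 0)"] by simp
    ultimately have "e * norm (z - x 0) \<le> B"
      using \<open>0 < e\<close> that by (smt (verit) mult_left_mono)
    then have "norm (z - x 0) \<le> B / e" using \<open>0 < e\<close> by (simp add: pos_le_divide_eq mult.commute)
    then show ?thesis by simp
  qed simp
  then have "bounded {z. C z \<le> B}"
    by (intro bounded_subset[OF bounded_cball[of "x 0" "max 1 (B / e)"]]) (auto simp: dist_norm norm_minus_commute)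
  moreover have "closed {z. C z \<le> B}"
    by (rule closed_Collect_le[OF continuous_C continuous_on_const])
  ultimately show ?thesis by (simp add: compact_eq_bounded_closed)
qed

definition resultant :: "nat \<Rightarrow> 'a \<Rightarrow> 'a" where
  "resultant k y = (\<Sum>i\<in>{..<m} - {k}. w i y *\<^sub>R (x i - x k))"

lemma dist_T_data_point:
  assumes "k < m" "y \<noteq> x k"
  shows "dist (T y) (x k) = norm (resultant k y) / W y"
proof -
  have W: "0 < W y" using W_pos[OF assms] .
  have "W y *\<^sub>R (T y - x k) = (\<Sum>i<m. w i y *\<^sub>R (x i - x k))"
    using W_scaleR_T[OF W] by (simp add: W_def scaleR_diff_right sum_subtractf scaleR_sum_left)
  also have "\<dots> = resultant k y"
    unfolding resultant_def using assms(1) by (simp add: sum.remove[of "{..<m}" k])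
  finally have "W y * dist (T y) (x k) = norm (resultant k y)"
    using W by (metis abs_of_pos dist_norm norm_scaleR)
  then show ?thesis using W by (simp add: field_simps)
qed

lemma G_data_point: "k < m \<Longrightarrow> G (x k) = - q *\<^sub>R resultant k (x k)"
  unfolding G_def resultant_def
  by (simp add: sum.remove[of "{..<m}" k] w_def scaleR_sum_right flip: sum_negf)
    (simp add: algebra_simps)

lemma W_split:
  "k < m \<Longrightarrow> W y = eta k powr q * dist y (x k) powr (q - 2) + (\<Sum>i\<in>{..<m} - {k}. w i y)"
  unfolding W_def by (simp add: sum.remove[of "{..<m}" k] w_def dist_norm)

lemma tendsto_w_data_point:
  assumes "i \<in> {..<m} - {k}" "k < m"
  shows "(w i \<longlongrightarrow> w i (x k)) (at (x k))"
proof -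
  have "x k \<noteq> x i" using inj_x assms by (auto dest: inj_onD)
  then show ?thesis unfolding w_def by (intro tendsto_intros) auto
qed

lemma inverse_W_tendsto_zero:
  assumes k: "k < m"
  shows "((\<lambda>y. 1 / W y) \<longlongrightarrow> 0) (at (x k))"
proof (rule tendsto_sandwich)
  define e where "e = eta k powr q"
  have e: "0 < e" using eta_pos[OF k] by (simp add: e_def)
  show "\<forall>\<^sub>F y in at (x k). 0 \<le> 1 / W y"
    using eventually_neq_at_within[of "x k"] by eventually_elim (simp add: W_pos[OF k] less_imp_le)
  show "\<forall>\<^sub>F y in at (x k). 1 / W y \<le> dist y (x k) powr (2 - q) / e"
    using eventually_neq_at_within[of "x k"]
  proof eventually_elim
    case (elim y)
    then have d: "0 < dist y (x k)" by simp
    have "e * dist y (x k) powr (q - 2) \<le> W y"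
      using W_split[OF k, of y] unfolding e_def by (simp add: sum_nonneg w_def)
    moreover have "dist y (x k) powr (2 - q) = 1 / dist y (x k) powr (q - 2)"
      using powr_minus_divide[of "dist y (x k)" "q - 2"] by simp
    moreover have "0 < e * dist y (x k) powr (q - 2)" using d e by simp
    ultimately have "1 / W y \<le> 1 / (e * dist y (x k) powr (q - 2))"
      using frac_le[of 1 1 "e * dist y (x k) powr (q - 2)" "W y"] by simp
    also have "\<dots> = dist y (x k) powr (2 - q) / e"
      using \<open>dist y (x k) powr (2 - q) = 1 / dist y (x k) powr (q - 2)\<close> by simp
    finally show "1 / W y \<le> dist y (x k) powr (2 - q) / e" .
  qed
  show "((\<lambda>y. dist y (x k) powr (2 - q) / e) \<longlongrightarrow> 0) (at (x k))"
    using q_lt_2 by (auto intro!: tendsto_divide_zero tendsto_zero_powrI tendsto_dist_at)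
qed simp

lemma dist_W_tendsto_zero:
  assumes k: "k < m"
  shows "((\<lambda>y. dist y (x k) * W y) \<longlongrightarrow> 0) (at (x k))"
proof -
  define S where "S y = (\<Sum>i\<in>{..<m} - {k}. w i y)" for y
  have "((\<lambda>y. eta k powr q * dist y (x k) powr (q - 1) + dist y (x k) * S y)
      \<longlongrightarrow> eta k powr q * 0 + 0 * S (x k)) (at (x k))"
    unfolding S_def using q_gt_1 k
    by (intro tendsto_add tendsto_mult tendsto_const tendsto_zero_powrI tendsto_dist_at
        tendsto_sum tendsto_w_data_point) auto
  moreover have "\<forall>\<^sub>F y in at (x k). eta k powr q * dist y (x k) powr (q - 1) + dist y (x k) * S y
      = dist y (x k) * W y"
    using eventually_neq_at_within[of "x k"]
  proof eventually_elim
    case (elim y)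
    then have "dist y (x k) * dist y (x k) powr (q - 2) = dist y (x k) powr (q - 1)"
      by (simp add: powr_mult_base)
    then show "eta k powr q * dist y (x k) powr (q - 1) + dist y (x k) * S y = dist y (x k) * W y"
      unfolding W_split[OF k] S_def by (simp add: algebra_simps)
  qed
  ultimately show ?thesis by (simp add: Lim_transform_eventually)
qed

lemma tendsto_resultant: "k < m \<Longrightarrow> (resultant k \<longlongrightarrow> resultant k (x k)) (at (x k))"
  unfolding resultant_def by (intro tendsto_sum tendsto_scaleR tendsto_w_data_point tendsto_const) auto

lemma tendsto_T_data_point:
  assumes k: "k < m"
  shows "(T \<longlongrightarrow> x k) (at (x k))"
proof -
  have "((\<lambda>y. norm (resultant k y) * (1 / W y)) \<longlongrightarrow> norm (resultant k (x k)) * 0) (at (x k))"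
    using tendsto_norm[OF tendsto_resultant[OF k]] inverse_W_tendsto_zero[OF k] by (rule tendsto_mult)
  moreover have "\<forall>\<^sub>F y in at (x k). norm (resultant k y) * (1 / W y) = dist (T y) (x k)"
    using eventually_neq_at_within[of "x k" "x k" UNIV] by eventually_elim (simp add: dist_T_data_point[OF k])
  ultimately have "((\<lambda>y. dist (T y) (x k)) \<longlongrightarrow> 0) (at (x k))"
    by (auto intro: Lim_transform_eventually)
  then show ?thesis by (rule tendsto_dist_iff[THEN iffD2])
qed

text \<open>Near a data point \<open>x k\<close> the weight \<open>w k\<close> blows up like \<open>dist y (x k) powr (q - 2)\<close>,
  so \<open>T y\<close> is close to \<open>x k\<close>, but only at distance of order \<open>dist y (x k) powr (2 - q)\<close>,
  which is much larger than \<open>dist y (x k)\<close> unless the resultant pull vanishes.\<close>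
lemma T_repels_from_data_point:
  assumes k: "k < m" and G: "G (x k) \<noteq> 0"
  shows "filterlim (\<lambda>y. dist (T y) (x k) / dist y (x k)) at_top (at (x k))"
proof -
  have "0 < norm (resultant k (x k))" using G G_data_point[OF k] by auto
  moreover have "\<forall>\<^sub>F y in at (x k). 0 < dist y (x k) * W y"
    using eventually_neq_at_within[of "x k"] by eventually_elim (simp add: W_pos[OF k])
  ultimately have "filterlim (\<lambda>y. norm (resultant k y) / (dist y (x k) * W y)) at_top (at (x k))"
    using tendsto_norm[OF tendsto_resultant[OF k]] dist_W_tendsto_zero[OF k]
    by (intro LIM_at_top_divide)
  moreover have "\<forall>\<^sub>F y in at (x k). norm (resultant k y) / (dist y (x k) * W y)
      = dist (T y) (x k) / dist y (x k)"
    using eventually_neq_at_within[of "x k"] by eventually_elim (simp add: dist_T_data_point[OF k])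
  ultimately show ?thesis by (auto intro: filterlim_cong[THEN iffD1, rotated 2])
qed

end

locale qpwaws_minimizer = qpwaws +
  fixes M :: 'a
  assumes M_min: "\<And>z. C M \<le> C z"
begin

lemma G_M: "G M = 0"
  using G_zero_if_minimizer M_min by blast

lemma C_M_less: "z \<noteq> M \<Longrightarrow> C M < C z"
  using C_gt_tangent[of z M] G_M by simp

lemma eq_M_if_G_zero: "G z = 0 \<Longrightarrow> z = M"
  using C_gt_tangent[of M z] M_min[of z] by force

lemma C_T_less:
  assumes "z \<notin> data" "z \<noteq> M"
  shows "C (T z) < C z"
proof -
  have "T z \<noteq> z" using eq_M_if_G_zero G_eq_T assms by force
  then have "0 < q / 2 * W z * (norm (z - T z))\<^sup>2"
    using q_gt_1 W_pos_off_data[OF assms(1)] by simp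
  then show ?thesis using C_T_le[OF assms(1)] by linarith
qed

lemma step_decreases: "qpwaws_step m q x eta y y' \<Longrightarrow> y \<noteq> M \<Longrightarrow> C y' < C y"
  using C_T_less by (cases "y \<in> data") (auto simp: qpwaws_step_def)

lemma T_orbit_leaves_compact:
  assumes K: "compact K" "K \<inter> data = {}" "M \<notin> K"
    and orbit: "\<And>p. y (Suc p) = T (y p)" and conv: "convergent (\<lambda>p. C (y p))"
  shows "\<forall>\<^sub>F p in sequentially. y p \<notin> K"
proof -
  obtain \<alpha> where \<alpha>: "0 < \<alpha>" "\<And>z. z \<in> K \<Longrightarrow> \<alpha> \<le> C z - C (T z)"
  proof (cases "K = {}")
    case True
    then show thesis using that[of 1] by simp
  next
    case False
    have "K \<subseteq> - data" using K(2) by blast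
    then have "continuous_on K (\<lambda>z. C z - C (T z))"
      by (intro continuous_on_diff continuous_on_subset[OF continuous_C]
          continuous_on_compose2[OF continuous_C continuous_on_subset[OF continuous_T]]) auto
    then obtain z0 where "z0 \<in> K" "\<And>z. z \<in> K \<Longrightarrow> C z0 - C (T z0) \<le> C z - C (T z)"
      using continuous_attains_inf[OF K(1) False] by blast
    moreover have "0 < C z0 - C (T z0)" using C_T_less K \<open>z0 \<in> K\<close> by auto
    ultimately show thesis using that by blast
  qed
  obtain c where "(\<lambda>p. C (y p)) \<longlonglongrightarrow> c" using conv by (auto simp: convergent_def)
  then have "(\<lambda>p. C (y p) - C (y (Suc p))) \<longlonglongrightarrow> c - c"
    by (intro tendsto_diff LIMSEQ_Suc)
  then have "\<forall>\<^sub>F p in sequentially. C (y p) - C (y (Suc p)) < \<alpha>"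
    using \<alpha>(1) by (intro order_tendstoD(2)) auto
  then show ?thesis
    by eventually_elim (use \<alpha>(2) orbit in force)
qed

lemma T_orbit_decseq:
  assumes "\<And>p. y (Suc p) = T (y p)" "\<And>p. y p \<notin> data" "\<And>p. y p \<noteq> M"
  shows "decseq (\<lambda>p. C (y p))"
  using C_T_less assms by (intro decseq_SucI less_imp_le) simp

lemma data_point_repels:
  assumes "a \<in> data - {M}"
  shows "(T \<longlongrightarrow> a) (at a)" and "filterlim (\<lambda>y. dist (T y) a / dist y a) at_top (at a)"
proof -
  obtain k where "k < m" "a = x k" using assms by auto
  moreover have "G a \<noteq> 0" using assms eq_M_if_G_zero by auto
  ultimately show "(T \<longlongrightarrow> a) (at a)" "filterlim (\<lambda>y. dist (T y) a / dist y a) at_top (at a)"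
    using tendsto_T_data_point T_repels_from_data_point by blast+
qed

lemma T_orbit_eventually_near_data:
  assumes orbit: "\<And>p. y (Suc p) = T (y p)" and lim: "(\<lambda>p. C (y p)) \<longlonglongrightarrow> c"
    and bounds: "\<And>p. c \<le> C (y p)" "\<And>p. C (y p) \<le> B" and "C M < c" "0 < \<delta>"
  shows "\<forall>\<^sub>F p in sequentially. \<exists>a\<in>data - {M}. dist (y p) a < \<delta>"
proof -
  define K where "K = {z. C z \<le> B} \<inter> {z. c \<le> C z} - (\<Union>a\<in>data - {M}. ball a \<delta>)"
  have "compact ({z. C z \<le> B} \<inter> {z. c \<le> C z})"
    by (intro compact_Int_closed compact_sublevel_C closed_Collect_le continuous_C continuous_on_const)
  then have "compact K"
    unfolding K_def by (intro compact_diff open_UN ballI open_ball)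
  moreover have "K \<inter> data = {}" "M \<notin> K"
    using \<open>C M < c\<close> \<open>0 < \<delta>\<close> by (auto simp: K_def)
  moreover have "convergent (\<lambda>p. C (y p))" using lim by (auto simp: convergent_def)
  ultimately have "\<forall>\<^sub>F p in sequentially. y p \<notin> K"
    by (intro T_orbit_leaves_compact orbit)
  then show ?thesis
    by eventually_elim (use bounds in \<open>auto simp: K_def dist_commute\<close>)
qed

text \<open>If the costs stalled above the minimum, the orbit would eventually stay in small balls
  around the data points other than \<open>M\<close>, but these repel every orbit.\<close>
lemma T_orbit_cost_tendsto_min:
  assumes orbit: "\<And>p. y (Suc p) = T (y p)" and off: "\<And>p. y p \<notin> data" and ne: "\<And>p. y p \<noteq> M"
  shows "(\<lambda>p. C (y p)) \<longlonglongrightarrow> C M"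
proof -
  have dec: "decseq (\<lambda>p. C (y p))" using T_orbit_decseq assms .
  obtain c where lim: "(\<lambda>p. C (y p)) \<longlonglongrightarrow> c" and c_le: "\<And>p. c \<le> C (y p)"
    using decseq_convergent[OF dec, of "C M"] M_min by blast
  have le_start: "\<And>p. C (y p) \<le> C (y 0)" using decseqD[OF dec] by simp
  have "C M \<le> c" using lim M_min by (intro LIMSEQ_le_const) auto
  moreover have "\<not> C M < c"
  proof
    assume "C M < c"
    obtain \<delta> where "0 < \<delta>" and escape: "\<forall>z. (\<forall>p. z (Suc p) = T (z p)) \<longrightarrow> (\<forall>p. z p \<notin> data - {M}) \<longrightarrow>
        (\<exists>p. \<forall>a\<in>data - {M}. \<delta> \<le> dist (z p) a)"
      using repelling_points_escape[of "data - {M}" T] data_point_repels by auto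
    obtain P where P: "\<And>p. P \<le> p \<Longrightarrow> \<exists>a\<in>data - {M}. dist (y p) a < \<delta>"
      using T_orbit_eventually_near_data[OF orbit lim c_le le_start \<open>C M < c\<close> \<open>0 < \<delta>\<close>]
      unfolding eventually_sequentially by auto
    have "\<exists>p. \<forall>a\<in>data - {M}. \<delta> \<le> dist (y (p + P)) a"
      by (rule escape[rule_format]) (use orbit off in auto)
    then show False using P by (meson le_add2 not_le)
  qed
  ultimately show ?thesis using lim by simp
qed

lemma T_orbit_tendsto_M:
  assumes "\<And>p. y (Suc p) = T (y p)" "\<And>p. y p \<notin> data" "\<And>p. y p \<noteq> M"
  shows "y \<longlonglongrightarrow> M"
proof (rule tendsto_strict_minimizer[OF continuous_C compact_sublevel_C C_M_less])
  show "C (y p) \<le> C (y 0)" for p using decseqD[OF T_orbit_decseq[of y, OF assms]] by simp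
  show "(\<lambda>p. C (y p)) \<longlonglongrightarrow> C M" using T_orbit_cost_tendsto_min[of y, OF assms] .
qed

lemma iterates_tendsto_M:
  assumes iter: "\<And>p. qpwaws_step m q x eta (y p) (y (Suc p))" and ne: "\<And>p. y p \<noteq> M"
  shows "y \<longlonglongrightarrow> M"
proof -
  have "\<forall>\<^sub>F p in sequentially. y p \<notin> data"
    using step_decreases[OF iter ne] by (intro strict_decreasing_eventually_notin_finite) auto
  then obtain P where P: "\<And>p. P \<le> p \<Longrightarrow> y p \<notin> data" by (auto simp: eventually_sequentially)
  have "(\<lambda>p. y (p + P)) \<longlonglongrightarrow> M"
    using P iter ne by (intro T_orbit_tendsto_M) (auto simp: qpwaws_step_def)
  then show ?thesis by (rule LIMSEQ_offset)
qed

lemma minimizer_detected: "(M \<notin> data \<and> T M = M) \<or> (\<exists>k<m. M = x k \<and> gradDq m q x eta k = 0)"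
proof (cases "M \<in> data")
  case True
  then show ?thesis using G_M gradDq_eq_G by auto
next
  case False
  then have "(q * W M) *\<^sub>R (M - T M) = 0" using G_eq_T G_M by simp
  then show ?thesis using False q_gt_1 W_pos_off_data[OF False] by simp
qed

end

theorem theorem4:
  fixes x :: "nat \<Rightarrow> 'a::euclidean_space" and eta :: "nat \<Rightarrow> real"
    and m :: nat and q :: real and M :: 'a and y :: "nat \<Rightarrow> 'a"
  assumes q: "1 < q" "q < 2"
    and distinct: "inj_on x {..<m}"
    and noncollinear: "\<not> (\<exists>a v. \<forall>i<m. \<exists>t::real. x i = a + t *\<^sub>R v)"
    and eta_pos: "\<forall>i<m. eta i > 0"
    and M_min: "\<forall>z. Cq m q x eta M \<le> Cq m q x eta z"
    and iter: "\<forall>p. y p \<noteq> M \<longrightarrow> qpwaws_step m q x eta (y p) (y (Suc p))"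
  shows "((\<forall>p. y p \<noteq> M) \<longrightarrow> y \<longlonglongrightarrow> M) \<and>
         (\<forall>p. y p = M \<longrightarrow>
            ((y p \<notin> x ` {..<m} \<and> T1 m q x eta (y p) = y p) \<or>
             (\<exists>k<m. y p = x k \<and> gradDq m q x eta k = 0)))"
proof -
  \<comment> \<open>Noncollinearity is only needed to exclude the empty configuration \<open>m = 0\<close>.\<close>
  have "0 < m" using noncollinear by (rule contrapos_np) auto
  then interpret qpwaws_minimizer m q x eta M
    using q distinct eta_pos M_min by unfold_locales auto
  show ?thesis using iterates_tendsto_M iter minimizer_detected by blast
qed

end
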